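(* Let $(X,d)$ be a nonempty, separable, ultrametric metric space which is spherically dense. Then: (a) for every $c_0\in X$, all real numbers $0\le r_1<r_0$, and every $z\in X$, there exists $c_1\in X$ such that $B(c_1,r_1)\subseteq B(c_0,r_0)$ and $z\notin B(c_1,r_1)$; (b) $X$ is not spherically complete.
   Context: $B(c,r)=\{x: d(x,c)\le r\}$ is the closed ball, $r\ge0$. A metric space is spherically dense if $\operatorname{diam}(B(c,r))=r$ for every $c\in X$ and every $r\ge 0$, where $\operatorname{diam}(A)=\sup_{x,y\in A}d(x,y)$. Ultrametric: $d(x,z)\le\max(d(x,y),d(y,z))$. Separable: has a countable dense subset. Spherically complete: for all sequences $(c_i)$ in $X$, $(r_i)$ in $\mathbb R_{\ge0}$ with $B(c_0,r_0)\supseteq B(c_1,r_1)\supseteq\cdots$, $\bigcap_i B(c_i,r_i)\ne\emptyset$. *)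

theory Defs
  imports "HOL-Analysis.Analysis"
begin

text \<open>The metric space X is the whole type 'a (hence nonempty), with closed balls cball c r.\<close>

definition ultrametric :: "'a::metric_space itself \<Rightarrow> bool" where
  "ultrametric _ \<longleftrightarrow> (\<forall>x y z::'a. dist x z \<le> max (dist x y) (dist y z))"

definition separable_metric :: "'a::metric_space itself \<Rightarrow> bool" where
  "separable_metric _ \<longleftrightarrow> (\<exists>D::'a set. countable D \<and> closure D = UNIV)"

definition spherically_dense :: "'a::metric_space itself \<Rightarrow> bool" where
  "spherically_dense _ \<longleftrightarrow> (\<forall>(c::'a) (r::real). r \<ge> 0 \<longrightarrow> diameter (cball c r) = r)"

definition spherically_complete :: "'a::metric_space itself \<Rightarrow> bool" where
  "spherically_complete _ \<longleftrightarrow>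
     (\<forall>(c::nat \<Rightarrow> 'a) (r::nat \<Rightarrow> real).
        (\<forall>i. r i \<ge> 0) \<longrightarrow> (\<forall>i. cball (c (Suc i)) (r (Suc i)) \<subseteq> cball (c i) (r i)) \<longrightarrow>
        (\<Inter>i. cball (c i) (r i)) \<noteq> {})"

end

theory Submission
  imports Defs
begin

text \<open>
  In an ultrametric space every point of a closed ball is a centre of it. Spherical density
  provides, inside any ball of radius r0, two points at distance > r1 (for any r1 < r0);
  by the ultrametric inequality one of them is at distance > r1 from a given z, and the
  ball of radius r1 around it stays inside the big ball and misses z. Enumerating a
  countable dense set as e 0, e 1, ..., this yields nested balls with radii decreasing to 1
  such that the (i+1)-st ball misses e i. A point of the intersection would have some e j
  within distance 1, and then e j would lie in every ball, in particular in the (j+1)-st.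
\<close>

lemma ultrametricD:
  assumes "ultrametric TYPE('a::metric_space)"
  shows "dist x z \<le> max (dist x y) (dist y (z::'a))"
  using assms unfolding ultrametric_def by blast

lemma ultrametric_cball_subset:
  assumes "ultrametric TYPE('a::metric_space)" "dist c0 c1 \<le> r0" "r1 \<le> r0"
  shows "cball (c1::'a) r1 \<subseteq> cball c0 r0"
proof
  fix w assume "w \<in> cball c1 r1"
  then have "dist c1 w \<le> r0" using assms(3) by simp
  with assms(2) ultrametricD[OF assms(1), of c0 w c1] show "w \<in> cball c0 r0" by simp
qed

lemma ultrametric_far_point:
  assumes "ultrametric TYPE('a::metric_space)" "bounded S" "0 \<le> r" "r < diameter S"
  shows "\<exists>x\<in>S. r < dist x (z::'a)"
proof -
  have "0 < (r + diameter S) / 2" "(r + diameter S) / 2 < diameter S" using assms(3,4) by auto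
  then obtain x y where xy: "x \<in> S" "y \<in> S" "(r + diameter S) / 2 < dist x y"
    using diameter_lower_bounded[OF assms(2)] by blast
  have "dist x y \<le> max (dist x z) (dist y z)"
    using ultrametricD[OF assms(1), of x y z] by (simp add: dist_commute)
  then have "r < dist x z \<or> r < dist y z" using xy(3) assms(4) by (auto simp: le_max_iff_disj)
  with xy(1,2) show ?thesis by blast
qed

lemma spherically_dense_cball_avoiding:
  fixes c0 z :: "'a::metric_space"
  assumes "ultrametric TYPE('a)" "spherically_dense TYPE('a)"
    and "0 \<le> r1" "r1 < r0"
  obtains c1 where "cball c1 r1 \<subseteq> cball c0 r0" "z \<notin> cball c1 r1"
proof -
  have "diameter (cball c0 r0) = r0"
    using assms(2-4) unfolding spherically_dense_def by simp
  then have "\<exists>c1\<in>cball c0 r0. r1 < dist c1 z"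
    using ultrametric_far_point[OF assms(1) bounded_cball assms(3)] assms(4) by simp
  then obtain c1 where "c1 \<in> cball c0 r0" "r1 < dist c1 z" by blast
  moreover have "cball c1 r1 \<subseteq> cball c0 r0"
    using \<open>c1 \<in> cball c0 r0\<close> assms(4) by (intro ultrametric_cball_subset[OF assms(1)]) auto
  ultimately show thesis using that by simp
qed

lemma spherically_dense_nested_cballs_avoiding:
  fixes e :: "nat \<Rightarrow> 'a::metric_space"
  assumes "ultrametric TYPE('a)" "spherically_dense TYPE('a)"
    and "\<And>i. 0 \<le> r (Suc i)" "\<And>i. r (Suc i) < r i"
  obtains c :: "nat \<Rightarrow> 'a"
  where "\<And>i. cball (c (Suc i)) (r (Suc i)) \<subseteq> cball (c i) (r i)"
    and "\<And>i. e i \<notin> cball (c (Suc i)) (r (Suc i))"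
proof -
  have "\<exists>c1. cball c1 (r (Suc i)) \<subseteq> cball c0 (r i) \<and> e i \<notin> cball c1 (r (Suc i))"
    for c0 i
    by (rule spherically_dense_cball_avoiding[OF assms(1,2,3) assms(4)[of i]]) blast
  then have "\<exists>c. \<forall>i. True \<and> cball (c (Suc i)) (r (Suc i)) \<subseteq> cball (c i) (r i)
                         \<and> e i \<notin> cball (c (Suc i)) (r (Suc i))"
    by (intro dependent_nat_choice[of "\<lambda>_ _. True"
          "\<lambda>i c0 c1. cball c1 (r (Suc i)) \<subseteq> cball c0 (r i) \<and> e i \<notin> cball c1 (r (Suc i))"])
      simp_all
  with that show thesis by blast
qed

lemma spherically_dense_not_spherically_complete:
  assumes "ultrametric TYPE('a::metric_space)" "separable_metric TYPE('a)"
    and "spherically_dense TYPE('a)"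
  shows "\<not> spherically_complete TYPE('a)"
proof
  assume complete: "spherically_complete TYPE('a)"
  obtain D :: "'a set" where D: "countable D" "closure D = UNIV"
    using assms(2) unfolding separable_metric_def by blast
  then have "D \<noteq> {}" by auto
  define e where "e = from_nat_into D"
  define r :: "nat \<Rightarrow> real" where "r i = 1 + inverse (real (Suc i))" for i
  have r_ge_1: "1 \<le> r i" for i unfolding r_def by simp
  have r_nonneg: "0 \<le> r i" for i using r_ge_1[of i] by linarith
  have r_decreasing: "r (Suc i) < r i" for i unfolding r_def by (simp add: field_simps)
  obtain c where nested: "\<And>i. cball (c (Suc i)) (r (Suc i)) \<subseteq> cball (c i) (r i)"
    and avoids: "\<And>i. e i \<notin> cball (c (Suc i)) (r (Suc i))"
    using spherically_dense_nested_cballs_avoiding[where r = r and e = e,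
        OF assms(1,3) r_nonneg r_decreasing]
    by blast
  have "(\<Inter>i. cball (c i) (r i)) \<noteq> {}"
    using complete r_nonneg nested unfolding spherically_complete_def by blast
  then obtain x where x: "\<And>i. x \<in> cball (c i) (r i)" by blast
  have "x \<in> closure D" using D(2) by simp
  then obtain y where "y \<in> D" "dist y x < 1"
    unfolding closure_approachable using zero_less_one by blast
  moreover obtain j where "y = e j"
    using \<open>y \<in> D\<close> range_from_nat_into[OF \<open>D \<noteq> {}\<close> D(1)] unfolding e_def by blast
  ultimately have "e j \<in> cball x (r (Suc j))"
    using r_ge_1[of "Suc j"] by (simp add: dist_commute)
  moreover have "cball x (r (Suc j)) \<subseteq> cball (c (Suc j)) (r (Suc j))"
    using x[of "Suc j"] by (intro ultrametric_cball_subset[OF assms(1)]) simp_all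
  ultimately show False using avoids[of j] by blast
qed

theorem theorem3p2:
  assumes "ultrametric TYPE('a::metric_space)"
    and "separable_metric TYPE('a)"
    and "spherically_dense TYPE('a)"
  shows "(\<forall>(c0::'a) (r0::real) r1 (z::'a). 0 \<le> r1 \<and> r1 < r0 \<longrightarrow>
            (\<exists>c1::'a. cball c1 r1 \<subseteq> cball c0 r0 \<and> z \<notin> cball c1 r1))
         \<and> \<not> spherically_complete TYPE('a)"
proof
  show "\<forall>(c0::'a) r0 r1 z. 0 \<le> r1 \<and> r1 < r0 \<longrightarrow>
          (\<exists>c1. cball c1 r1 \<subseteq> cball c0 r0 \<and> z \<notin> cball c1 r1)"
    using spherically_dense_cball_avoiding[OF assms(1,3)] by blast
  show "\<not> spherically_complete TYPE('a)"
    by (rule spherically_dense_not_spherically_complete[OF assms])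
qed

end
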